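(* Let $F$ be a field of characteristic $2$, $R$ a commutative $F$-algebra, $a,b\in R$, $T=R[\alpha]:=R[t]/(t^2+t+a)$ with $\alpha$ the image of $t$, and $x+y\alpha\in T^\times$ (with $x,y\in R$) such that $x^2+xy+ay^2=u^2+uv+bv^2$ for some $u,v\in R$. If $v+y\in R^\times$, then $(v+y)(x+y\alpha)\in N_T(b)$. In particular, \[\{b,x+y\alpha\}_T=\{b,v+y\}_T\] in $\operatorname{Br}(T)$.
   Context: For a commutative $F$-algebra $S$ (with $\operatorname{char}F=2$), $c\in S$ and $d\in S^\times$, $[c,d)_S$ denotes the quaternion algebra $S\oplus Si\oplus Sj\oplus Sk$ with multiplication $i^2+i=c$, $j^2=d$, $ij=k=ji+j$; its class in the Brauer group $\operatorname{Br}(S)$ is denoted $\{c,d\}_S$. $N_S(c)$ denotes the subgroup of $S^\times$ consisting of all units of the form $X^2+XY+cY^2$ with $X,Y\in S$ (the image of the norm map from $(S[t]/(t^2+t+c))^\times$). *)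

theory Defs
  imports Main
begin

text \<open>The quadratic extension T = R[alpha] = R[t]/(t^2+t+a), represented via its
R-basis 1, alpha: the pair (x, y) stands for x + y*alpha.  Multiplication uses
alpha^2 = -alpha - a.\<close>

definition qadd :: "'a::comm_ring_1 \<times> 'a \<Rightarrow> 'a \<times> 'a \<Rightarrow> 'a \<times> 'a" where
  "qadd p q = (fst p + fst q, snd p + snd q)"

definition qmul :: "'a::comm_ring_1 \<Rightarrow> 'a \<times> 'a \<Rightarrow> 'a \<times> 'a \<Rightarrow> 'a \<times> 'a" where
  "qmul a p q = (fst p * fst q - a * snd p * snd q,
                 fst p * snd q + snd p * fst q - snd p * snd q)"

definition qemb :: "'a::comm_ring_1 \<Rightarrow> 'a \<times> 'a" where
  "qemb r = (r, 0)"

definition qunit :: "'a::comm_ring_1 \<Rightarrow> 'a \<times> 'a \<Rightarrow> bool" where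
  "qunit a p \<longleftrightarrow> (\<exists>q. qmul a p q = qemb 1)"

definition qnorms :: "'a::comm_ring_1 \<Rightarrow> 'a \<times> 'a \<Rightarrow> ('a \<times> 'a) set" where
  "qnorms a c = {z. qunit a z \<and> (\<exists>X Y. z = qadd (qadd (qmul a X X) (qmul a X Y))
                                                 (qmul a c (qmul a Y Y)))}"

end

theory Submission
  imports Defs
begin

text \<open>With \<open>X = (x + u) + y\<alpha>\<close> and \<open>Y = v\<close>, expanding \<open>X\<^sup>2 + XY + bY\<^sup>2\<close> with \<open>\<alpha>\<^sup>2 = \<alpha> + a\<close>
and replacing \<open>u\<^sup>2 + uv + bv\<^sup>2\<close> by \<open>x\<^sup>2 + xy + ay\<^sup>2\<close>, all squares cancel in characteristic 2
and what is left is \<open>(v + y)(x + y\<alpha>)\<close>. It is a unit of \<open>T\<close> as a product of two units.\<close>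

lemma qmul_assoc: "qmul a (qmul a p q) r = qmul a p (qmul a q r)"
  by (simp add: qmul_def algebra_simps)

lemma qmul_qemb_left: "qmul a (qemb r) (x, y) = (r * x, r * y)"
  by (simp add: qmul_def qemb_def)

lemma qmul_qemb_qemb: "qmul a (qemb r) (qemb s) = qemb (r * s)"
  by (simp add: qmul_def qemb_def)

lemma qmul_qemb_one: "qmul a (qemb 1) p = p"
  by (cases p) (simp add: qmul_qemb_left)

lemma qunit_qemb:
  assumes "\<exists>w. r * w = 1"
  shows "qunit a (qemb r)"
proof -
  obtain w where "r * w = 1" using assms by blast
  then have "qmul a (qemb r) (qemb w) = qemb 1" by (simp add: qmul_qemb_qemb)
  then show ?thesis unfolding qunit_def by blast
qed

lemma qunit_qmul:
  assumes "qunit a p" and "qunit a q"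
  shows "qunit a (qmul a p q)"
proof -
  obtain p' where p': "qmul a p p' = qemb 1" using assms(1) by (auto simp: qunit_def)
  obtain q' where q': "qmul a q q' = qemb 1" using assms(2) by (auto simp: qunit_def)
  have "qmul a (qmul a p q) (qmul a q' p') = qmul a p (qmul a (qmul a q q') p')"
    by (simp add: qmul_assoc)
  also have "\<dots> = qemb 1"
    by (simp add: q' p' qmul_qemb_one)
  finally show ?thesis unfolding qunit_def by blast
qed

lemma char2_norm_identity:
  fixes a b x y u v :: "'a::comm_ring_1"
  assumes char2: "(2::'a) = 0"
    and eq: "x^2 + x*y + a*y^2 = u^2 + u*v + b*v^2"
  shows "qadd (qadd (qmul a (x + u, y) (x + u, y)) (qmul a (x + u, y) (qemb v)))
              (qmul a (qemb b) (qmul a (qemb v) (qemb v)))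
         = qmul a (qemb (v + y)) (x, y)"
proof -
  have fst_eq: "(x + u) * (x + u) - a * y * y + (x + u) * v + b * (v * v) = (v + y) * x"
  proof -
    have "(x + u) * (x + u) - a * y * y + (x + u) * v + b * (v * v)
          = (v + y) * x + 2 * (x * x + x * u) + ((u^2 + u*v + b*v^2) - (x^2 + x*y + a*y^2))"
      by (simp add: algebra_simps power2_eq_square)
    then show ?thesis using char2 eq by simp
  qed
  have snd_eq: "(x + u) * y + y * (x + u) - y * y + y * v = (v + y) * y"
  proof -
    have "(x + u) * y + y * (x + u) - y * y + y * v = (v + y) * y + 2 * ((x + u) * y - y * y)"
      by (simp add: algebra_simps)
    then show ?thesis using char2 by simp
  qed
  have "qadd (qadd (qmul a (x + u, y) (x + u, y)) (qmul a (x + u, y) (qemb v)))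
              (qmul a (qemb b) (qmul a (qemb v) (qemb v)))
        = ((x + u) * (x + u) - a * y * y + (x + u) * v + b * (v * v),
           (x + u) * y + y * (x + u) - y * y + y * v)"
    by (simp add: qmul_def qadd_def qemb_def)
  also have "\<dots> = qmul a (qemb (v + y)) (x, y)"
    unfolding fst_eq snd_eq qmul_qemb_left ..
  finally show ?thesis .
qed

theorem lemma3p3:
  fixes a b x y u v :: "'a::comm_ring_1"
  assumes char2: "(2::'a) = 0"
    and unitT: "qunit a (x, y)"
    and eq: "x^2 + x*y + a*y^2 = u^2 + u*v + b*v^2"
    and unitR: "\<exists>w. (v + y) * w = 1"
  shows "qmul a (qemb (v + y)) (x, y) \<in> qnorms a (qemb b)"
proof -
  have "qunit a (qmul a (qemb (v + y)) (x, y))"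
    using qunit_qmul[OF qunit_qemb[OF unitR] unitT] .
  with char2_norm_identity[OF char2 eq, symmetric] show ?thesis
    unfolding qnorms_def by blast
qed

end
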